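(* Let $\Omega\subset\mathbb R^n$ be open and bounded with $\mathcal C^2$ boundary, $p>2$, $\lambda>0$, $\varepsilon>0$, $f\in\mathbf{Lip}(\overline\Omega)$, and let $u^\varepsilon$ be the maximal viscosity solution of $(\mathrm{SC}_\varepsilon)$. Let $g\in\mathcal C(\overline\Omega)$ and let $v\in\mathbf{Lip}(\overline\Omega)$ be a viscosity subsolution of $\lambda v+|Dv|^p-g=0$ in $\Omega$ which is semiconvex in $\Omega$ with semiconvexity constant $K$. Then $$\min_{\overline\Omega}(u^\varepsilon-v)\ge\frac1\lambda\Big(-Kn\varepsilon+\min_{\overline\Omega}(f-g)\Big).$$
   Context: $v$ is semiconvex with constant $K$ in $\Omega$ if $-v$ is semiconcave with constant $K$, i.e. for all $x,y$ with $[x,y]\subset\Omega$ and $t\in[0,1]$: $v(tx+(1-t)y)-tv(x)-(1-t)v(y)\le t(1-t)\frac{K|x-y|^2}{2}$. Viscosity subsolution in $\Omega$ of $\lambda v+|Dv|^p-g=0$: for $\varphi\in\mathcal C^1$ with $v-\varphi$ having a local max at $x_0\in\Omega$, $\lambda v(x_0)+|D\varphi(x_0)|^p-g(x_0)\le0$. The state-constraint problem $(\mathrm{SC}_\varepsilon)$: $u\in\mathcal C(\overline\Omega)$ is a viscosity subsolution of $\lambda u+|Du|^p-\varepsilon\Delta u=f$ in $\Omega$ and a viscosity supersolution on $\overline\Omega$ (test at local minima relative to $\overline\Omega$, including boundary points). For $f$ Lipschitz its maximal solution $u^\varepsilon$ lies in $\mathcal C^2(\Omega)\cap\mathcal C^{0,\alpha_p}(\overline\Omega)$,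 $\alpha_p=\frac{p-2}{p-1}$, and satisfies $\liminf_{\Omega\ni x\to x_0}\frac{u^\varepsilon(x)-u^\varepsilon(x_0)}{|x-x_0|^{\alpha_p}}<0$ for every $x_0\in\partial\Omega$. *)

theory Defs
  imports "HOL-Analysis.Analysis"
begin

definition C2_with :: "'a::euclidean_space set \<Rightarrow> ('a \<Rightarrow> real) \<Rightarrow> ('a \<Rightarrow> 'a) \<Rightarrow> ('a \<Rightarrow> 'a \<Rightarrow> 'a) \<Rightarrow> bool" where
  "C2_with S psi G H \<longleftrightarrow> open S \<and>
     (\<forall>x\<in>S. (psi has_derivative (\<lambda>h. G x \<bullet> h)) (at x)) \<and>
     (\<forall>x\<in>S. (G has_derivative H x) (at x)) \<and>
     (\<forall>i\<in>Basis. \<forall>j\<in>Basis. continuous_on S (\<lambda>x. H x i \<bullet> j))"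

definition C1_with :: "'a::euclidean_space set \<Rightarrow> ('a \<Rightarrow> real) \<Rightarrow> ('a \<Rightarrow> 'a) \<Rightarrow> bool" where
  "C1_with S psi G \<longleftrightarrow> open S \<and>
     (\<forall>x\<in>S. (psi has_derivative (\<lambda>h. G x \<bullet> h)) (at x)) \<and> continuous_on S G"

definition lap :: "('a::euclidean_space \<Rightarrow> 'a) \<Rightarrow> real" where
  "lap Hx = (\<Sum>i\<in>Basis. Hx i \<bullet> i)"

definition C2_boundary :: "'a::euclidean_space set \<Rightarrow> bool" where
  "C2_boundary \<Omega> \<longleftrightarrow> (\<forall>x0\<in>frontier \<Omega>. \<exists>r>0. \<exists>psi G H.
      C2_with (ball x0 r) psi G H \<and>
      \<Omega> \<inter> ball x0 r = {x\<in>ball x0 r. psi x < 0} \<and>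
      (\<forall>x\<in>frontier \<Omega> \<inter> ball x0 r. G x \<noteq> 0))"

definition visc_sub2 :: "'a::euclidean_space set \<Rightarrow> real \<Rightarrow> real \<Rightarrow> real \<Rightarrow> ('a \<Rightarrow> real) \<Rightarrow> ('a \<Rightarrow> real) \<Rightarrow> bool" where
  "visc_sub2 \<Omega> lam p eps f u \<longleftrightarrow> (\<forall>x0\<in>\<Omega>. \<forall>U phi G H.
      x0 \<in> U \<longrightarrow> C2_with U phi G H \<longrightarrow>
      (\<exists>r>0. \<forall>x\<in>ball x0 r \<inter> \<Omega>. u x - phi x \<le> u x0 - phi x0) \<longrightarrow>
      lam * u x0 + norm (G x0) powr p - eps * lap (H x0) \<le> f x0)"

definition visc_super2_cl :: "'a::euclidean_space set \<Rightarrow> real \<Rightarrow> real \<Rightarrow> real \<Rightarrow> ('a \<Rightarrow> real) \<Rightarrow> ('a \<Rightarrow> real) \<Rightarrow> bool" where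
  "visc_super2_cl \<Omega> lam p eps f u \<longleftrightarrow> (\<forall>x0\<in>closure \<Omega>. \<forall>U phi G H.
      x0 \<in> U \<longrightarrow> C2_with U phi G H \<longrightarrow>
      (\<exists>r>0. \<forall>x\<in>ball x0 r \<inter> closure \<Omega>. u x - phi x \<ge> u x0 - phi x0) \<longrightarrow>
      lam * u x0 + norm (G x0) powr p - eps * lap (H x0) \<ge> f x0)"

definition SC_solution :: "'a::euclidean_space set \<Rightarrow> real \<Rightarrow> real \<Rightarrow> real \<Rightarrow> ('a \<Rightarrow> real) \<Rightarrow> ('a \<Rightarrow> real) \<Rightarrow> bool" where
  "SC_solution \<Omega> lam p eps f u \<longleftrightarrow> continuous_on (closure \<Omega>) u \<and>
      visc_sub2 \<Omega> lam p eps f u \<and> visc_super2_cl \<Omega> lam p eps f u"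

definition SC_maximal_solution :: "'a::euclidean_space set \<Rightarrow> real \<Rightarrow> real \<Rightarrow> real \<Rightarrow> ('a \<Rightarrow> real) \<Rightarrow> ('a \<Rightarrow> real) \<Rightarrow> bool" where
  "SC_maximal_solution \<Omega> lam p eps f u \<longleftrightarrow> SC_solution \<Omega> lam p eps f u \<and>
      (\<forall>w. SC_solution \<Omega> lam p eps f w \<longrightarrow> (\<forall>x\<in>closure \<Omega>. w x \<le> u x))"

definition visc_sub1 :: "'a::euclidean_space set \<Rightarrow> real \<Rightarrow> real \<Rightarrow> ('a \<Rightarrow> real) \<Rightarrow> ('a \<Rightarrow> real) \<Rightarrow> bool" where
  "visc_sub1 \<Omega> lam p g v \<longleftrightarrow> (\<forall>x0\<in>\<Omega>. \<forall>U phi G.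
      x0 \<in> U \<longrightarrow> C1_with U phi G \<longrightarrow>
      (\<exists>r>0. \<forall>x\<in>ball x0 r \<inter> \<Omega>. v x - phi x \<le> v x0 - phi x0) \<longrightarrow>
      lam * v x0 + norm (G x0) powr p - g x0 \<le> 0)"

definition semiconvex_on :: "'a::euclidean_space set \<Rightarrow> real \<Rightarrow> ('a \<Rightarrow> real) \<Rightarrow> bool" where
  "semiconvex_on \<Omega> K v \<longleftrightarrow> (\<forall>x y t. closed_segment x y \<subseteq> \<Omega> \<longrightarrow> 0 \<le> t \<longrightarrow> t \<le> 1 \<longrightarrow>
      v (t *\<^sub>R x + (1 - t) *\<^sub>R y) - t * v x - (1 - t) * v y \<le> t * (1 - t) * K * (norm (x - y))\<^sup>2 / 2)"

end

theory Submission
  imports Defs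
begin

(* Doubling of variables.  Let z minimise u - v on the closure of Omega.  Since the boundary
   is C^2 there is an interior cone at z: a direction nu such that every point of the closure
   near z, moved by t nu up to an error rho t, lies in Omega.  Minimising
     u x - v y + k |y - x - delta nu|^2 + eta |x - z|^2
   over x near z and y in the closure, with k of order 1/delta, produces a minimiser
   (xd, yd) with yd in Omega, so the quadratic in y tests the subsolution property of v at yd.
   Semiconvexity turns this touching of v from above into a touching from below by a
   quadratic with Hessian -K, which gives a C^2 test function for the supersolution property
   of u at xd (possibly a boundary point); its Laplacian produces the term K n eps.  Subtracting
   the two inequalities and letting delta and then eta tend to 0 gives the estimate. *)

lemma has_derivative_norm_diff_square:
  fixes a :: "'a::euclidean_space"
  shows "((\<lambda>x. (norm (x - a))\<^sup>2) has_derivative (\<lambda>h. (2 *\<^sub>R (x - a)) \<bullet> h)) (at x within S)"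
proof -
  have "((\<lambda>x. (x - a) \<bullet> (x - a)) has_derivative (\<lambda>h. (x - a) \<bullet> h + h \<bullet> (x - a))) (at x within S)"
    by (auto intro!: derivative_eq_intros)
  then show ?thesis
    by (simp add: power2_norm_eq_inner inner_commute algebra_simps)
qed

lemma lap_scaleR: "lap (\<lambda>h::'a::euclidean_space. c *\<^sub>R h) = c * real DIM('a)"
  unfolding lap_def by (simp add: inner_Basis)

lemma powr_increment_le:
  fixes A B A0 p :: real
  assumes p: "1 \<le> p" and A: "0 \<le> A" "A \<le> A0" and B: "0 \<le> B" "B \<le> 1"
  shows "(A + B) powr p - A powr p \<le> p * (A0 + 1) powr (p - 1) * B"
proof (cases "B = 0")
  case False
  then have lt: "A < A + B" using B by simp
  have cont: "continuous_on {A..A+B} (\<lambda>x. x powr p)"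
    by (rule continuous_on_powr') (use A p in auto)
  have "(\<lambda>x. x powr p) differentiable (at x)" if "A < x" for x
    using has_real_derivative_powr[of x p] that A unfolding real_differentiable_def by auto
  then obtain l z where z: "A < z" "z < A + B" and d: "DERIV (\<lambda>x. x powr p) z :> l"
    and eq: "(A + B) powr p - A powr p = (A + B - A) * l"
    using MVT[OF lt cont] by blast
  have "l = p * z powr (p - 1)"
    using DERIV_unique[OF d has_real_derivative_powr[of z p]] z A by linarith
  moreover have "z powr (p - 1) \<le> (A0 + 1) powr (p - 1)"
    by (rule powr_mono2) (use p z A B in auto)
  ultimately have "l \<le> p * (A0 + 1) powr (p - 1)"
    using p by (simp add: mult_left_mono)
  then show ?thesis using eq B by (simp add: mult.commute mult_left_mono)
qed simp

lemma norm_diff_powr_le: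
  fixes q w :: "'a::real_normed_vector"
  assumes p: "1 \<le> p" and q: "norm q \<le> A" and w: "norm w \<le> b" "b \<le> 1"
  shows "norm (q - w) powr p \<le> norm q powr p + p * (A + 1) powr (p - 1) * b"
proof -
  have "norm (q - w) powr p \<le> (norm q + norm w) powr p"
    using p by (intro powr_mono2 norm_triangle_ineq4) auto
  also have "\<dots> \<le> norm q powr p + p * (A + 1) powr (p - 1) * norm w"
    using powr_increment_le[OF p norm_ge_zero q norm_ge_zero[of w]] w by simp
  also have "\<dots> \<le> norm q powr p + p * (A + 1) powr (p - 1) * b"
    using p w by (intro add_left_mono mult_left_mono) auto
  finally show ?thesis .
qed

subsection \<open>Semiconvex functions\<close>

lemma semiconvex_lower_support:
  fixes v :: "'a::euclidean_space \<Rightarrow> real"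
  assumes sc: "semiconvex_on \<Omega> K v" and ball: "ball y0 R \<subseteq> \<Omega>"
    and upper: "\<forall>y\<in>ball y0 R. v y - v y0 \<le> q \<bullet> (y - y0) + a * (norm (y - y0))\<^sup>2"
    and y: "y \<in> ball y0 R"
  shows "v y0 + q \<bullet> (y - y0) - K/2 * (norm (y - y0))\<^sup>2 \<le> v y"
proof -
  define D where "D = norm (y - y0)"
  define X where "X = v y - (v y0 + q \<bullet> (y - y0) - K/2 * D\<^sup>2)"
  have gap: "- s * ((a + K/2) * D\<^sup>2) \<le> X" if s: "0 < s" "s < 1" for s
  proof -
    \<comment> \<open>y0 lies on the segment from y to its reflection w; semiconvexity on that segment and
      the upper bound at w give the claim up to an error of order s\<close>
    define w where "w = y0 - s *\<^sub>R (y - y0)"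
    define t where "t = s / (1 + s)"
    have nw: "norm (w - y0) = s * D" using s by (simp add: w_def D_def)
    have "dist y0 w < R"
      using nw s y mult_left_le_one_le[of D s]
      by (simp add: dist_norm norm_minus_commute D_def)
    then have w: "w \<in> ball y0 R" by simp
    have "closed_segment y w \<subseteq> \<Omega>"
      using closed_segment_subset[OF y w convex_ball] ball by blast
    moreover have "0 \<le> t" "t \<le> 1" using s by (auto simp: t_def)
    ultimately have "v (t *\<^sub>R y + (1 - t) *\<^sub>R w) - t * v y - (1 - t) * v w
        \<le> t * (1 - t) * K * (norm (y - w))\<^sup>2 / 2"
      using sc unfolding semiconvex_on_def by blast
    moreover have "t *\<^sub>R y + (1 - t) *\<^sub>R w = y0"
    proof -
      have "(1 + s) *\<^sub>R (t *\<^sub>R y + (1 - t) *\<^sub>R w) = (1 + s) *\<^sub>R y0"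
        using s by (simp add: t_def w_def scaleR_add_right scaleR_diff_right divide_simps flip: scaleR_add_left)
      then show ?thesis using s by simp
    qed
    moreover have "norm (y - w) = (1 + s) * D"
    proof -
      have "y - w = (1 + s) *\<^sub>R (y - y0)" by (simp add: w_def algebra_simps)
      then show ?thesis using s by (simp add: D_def)
    qed
    ultimately have convex_step: "(1 + s) * v y0 - s * v y - v w \<le> s * (1 + s) * K * D\<^sup>2 / 2"
      using s by (simp add: t_def divide_simps power2_eq_square) (simp add: algebra_simps)
    have "v w - v y0 \<le> q \<bullet> (w - y0) + a * (norm (w - y0))\<^sup>2"
      using upper w by blast
    then have "v w - v y0 \<le> - s * (q \<bullet> (y - y0)) + a * (s * D)\<^sup>2"
      unfolding nw by (simp add: w_def)
    with convex_step have "s * (- s * ((a + K/2) * D\<^sup>2)) \<le> s * X"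
      by (simp add: X_def algebra_simps power2_eq_square)
    then show ?thesis using s by (simp only: mult_le_cancel_left_pos)
  qed
  have "((\<lambda>s. - s * ((a + K/2) * D\<^sup>2)) \<longlongrightarrow> - 0 * ((a + K/2) * D\<^sup>2)) (at_right 0)"
    by (intro tendsto_mult tendsto_minus tendsto_ident_at tendsto_const)
  moreover have "\<forall>\<^sub>F s in at_right 0. - s * ((a + K/2) * D\<^sup>2) \<le> X"
    by (rule eventually_at_rightI[of 0 1]) (use gap in auto)
  ultimately have "- 0 * ((a + K/2) * D\<^sup>2) \<le> X"
    by (rule tendsto_le[OF trivial_limit_at_right_real tendsto_const])
  then show ?thesis by (simp add: X_def D_def)
qed

lemma semiconvex_quadratic_max_support:
  fixes v :: "'a::euclidean_space \<Rightarrow> real"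
  assumes sc: "semiconvex_on \<Omega> K v" and ball: "ball y0 R \<subseteq> \<Omega>"
    and max: "\<And>y. y \<in> ball y0 R \<Longrightarrow> v y - k * (norm (y - a))\<^sup>2 \<le> v y0 - k * (norm (y0 - a))\<^sup>2"
    and y: "y \<in> ball y0 R"
  shows "v y0 + ((2 * k) *\<^sub>R (y0 - a)) \<bullet> (y - y0) - K/2 * (norm (y - y0))\<^sup>2 \<le> v y"
proof (rule semiconvex_lower_support[OF sc ball _ y])
  show "\<forall>y\<in>ball y0 R. v y - v y0 \<le> ((2 * k) *\<^sub>R (y0 - a)) \<bullet> (y - y0) + k * (norm (y - y0))\<^sup>2"
  proof
    fix y assume "y \<in> ball y0 R"
    have "(norm (d + e))\<^sup>2 = (norm e)\<^sup>2 + 2 * (e \<bullet> d) + (norm d)\<^sup>2" for d e :: 'a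
      by (simp add: power2_norm_eq_inner inner_add_left inner_add_right inner_commute)
    from this[of "y - y0" "y0 - a"]
    have "(norm (y - a))\<^sup>2 = (norm (y0 - a))\<^sup>2 + 2 * ((y0 - a) \<bullet> (y - y0)) + (norm (y - y0))\<^sup>2"
      by simp
    then have "k * (norm (y - a))\<^sup>2
        = k * (norm (y0 - a))\<^sup>2 + ((2 * k) *\<^sub>R (y0 - a)) \<bullet> (y - y0) + k * (norm (y - y0))\<^sup>2"
      by (simp add: ring_distribs)
    then show "v y - v y0 \<le> ((2 * k) *\<^sub>R (y0 - a)) \<bullet> (y - y0) + k * (norm (y - y0))\<^sup>2"
      using max[OF \<open>y \<in> ball y0 R\<close>] by linarith
  qed
qed

subsection \<open>Interior cones at boundary points\<close>

text \<open>Unlike the usual cone condition, the vertex x may be any point of the closure near z;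
  this is what puts the second doubled point inside \<Omega>.\<close>

definition interior_cone_at :: "'a::real_normed_vector set \<Rightarrow> 'a \<Rightarrow> 'a \<Rightarrow> real \<Rightarrow> bool" where
  "interior_cone_at \<Omega> z \<nu> \<rho> \<longleftrightarrow> (\<forall>x\<in>closure \<Omega>. \<forall>y t. dist x z < \<rho> \<longrightarrow> dist y z < \<rho> \<longrightarrow> 0 < t \<longrightarrow>
      norm (y - x - t *\<^sub>R \<nu>) \<le> \<rho> * t \<longrightarrow> y \<in> \<Omega>)"

lemma interior_cone_atD:
  "interior_cone_at \<Omega> z \<nu> \<rho> \<Longrightarrow> x \<in> closure \<Omega> \<Longrightarrow> dist x z < \<rho> \<Longrightarrow> dist y z < \<rho> \<Longrightarrow> 0 < t \<Longrightarrow>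
    norm (y - x - t *\<^sub>R \<nu>) \<le> \<rho> * t \<Longrightarrow> y \<in> \<Omega>"
  unfolding interior_cone_at_def by blast

lemma closure_sublevel_nonpos:
  fixes psi :: "'a::metric_space \<Rightarrow> real"
  assumes cont: "continuous_on T psi" and T: "open T"
    and sublevel: "\<Omega> \<inter> T = {x\<in>T. psi x < 0}"
    and x: "x \<in> closure \<Omega>" "x \<in> T"
  shows "psi x \<le> 0"
proof (rule ccontr)
  assume "\<not> psi x \<le> 0"
  then have "x \<in> T \<inter> psi -` {0<..}" using x by simp
  moreover have "open (T \<inter> psi -` {0<..})"
    using continuous_open_preimage[OF cont T] by simp
  ultimately have "\<Omega> \<inter> (T \<inter> psi -` {0<..}) \<noteq> {}"
    using x(1) unfolding closure_iff_nhds_not_empty by blast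
  then obtain y where "y \<in> \<Omega> \<inter> T" "0 < psi y" by auto
  with sublevel show False by auto
qed

lemma gradient_descent_cone:
  fixes psi :: "'a::euclidean_space \<Rightarrow> real"
  assumes S: "convex S" and deriv: "\<And>x. x \<in> S \<Longrightarrow> (psi has_derivative (\<lambda>h. G x \<bullet> h)) (at x)"
    and G_close: "\<And>\<xi>. \<xi> \<in> S \<Longrightarrow> norm (G \<xi> - G0) \<le> norm G0 / 4"
    and x: "x \<in> S" and y: "y \<in> S" and t: "0 < t" and G0: "G0 \<noteq> 0"
    and dir: "norm (y - x + t *\<^sub>R G0) \<le> norm G0 / 4 * t"
  shows "psi y < psi x"
proof -
  define c where "c = norm G0"
  have c: "0 < c" using G0 by (simp add: c_def)
  have seg: "x + s *\<^sub>R (y - x) \<in> S" if "0 \<le> s" "s \<le> 1" for s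
    using convexD_alt[OF S x y, of s] that by (simp add: algebra_simps)
  have "((\<lambda>s. psi (x + s *\<^sub>R (y - x))) has_derivative (\<lambda>h. G (x + s *\<^sub>R (y - x)) \<bullet> (h *\<^sub>R (y - x))))
      (at s within {0..1})" if "0 \<le> s" "s \<le> 1" for s
  proof -
    have "((\<lambda>s. x + s *\<^sub>R (y - x)) has_derivative (\<lambda>h. h *\<^sub>R (y - x))) (at s within {0..1})"
      by (auto intro!: derivative_eq_intros)
    from has_derivative_compose[OF this deriv[OF seg[OF that]]] show ?thesis
      by (simp add: o_def)
  qed
  from mvt_simple[of 0 1 "\<lambda>s. psi (x + s *\<^sub>R (y - x))"
      "\<lambda>s h. G (x + s *\<^sub>R (y - x)) \<bullet> (h *\<^sub>R (y - x))", OF zero_less_one this]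
  obtain s where s: "s \<in> {0<..<1}" and mv: "psi y - psi x = G (x + s *\<^sub>R (y - x)) \<bullet> (y - x)"
    by force
  define \<xi> where "\<xi> = x + s *\<^sub>R (y - x)"
  define e where "e = y - x + t *\<^sub>R G0"
  have close: "norm (G \<xi> - G0) \<le> c / 4" using G_close seg s by (simp add: \<xi>_def c_def)
  have aligned: "- (G \<xi> \<bullet> G0) \<le> - c\<^sup>2 + c / 4 * c"
  proof -
    have "G \<xi> \<bullet> G0 = c\<^sup>2 + (G \<xi> - G0) \<bullet> G0"
      by (simp add: c_def inner_diff_left power2_norm_eq_inner)
    moreover have "norm (G0 - G \<xi>) * c \<le> c / 4 * c"
      using close c by (intro mult_right_mono) (auto simp: norm_minus_commute)
    then have "- ((G \<xi> - G0) \<bullet> G0) \<le> c / 4 * c"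
      using norm_cauchy_schwarz[of "G0 - G \<xi>" G0] by (simp add: c_def inner_diff_left)
    ultimately show ?thesis by linarith
  qed
  moreover have "G \<xi> \<bullet> e \<le> 5 * c / 4 * (c / 4 * t)"
  proof -
    have "norm (G \<xi>) \<le> 5 * c / 4"
      using close norm_triangle_ineq[of "G \<xi> - G0" G0] by (simp add: c_def)
    then have "norm (G \<xi>) * norm e \<le> 5 * c / 4 * (c / 4 * t)"
      using dir c t by (intro mult_mono) (auto simp: e_def c_def)
    then show ?thesis using norm_cauchy_schwarz[of "G \<xi>" e] by linarith
  qed
  moreover have "t * (- (G \<xi> \<bullet> G0)) \<le> t * (- c\<^sup>2 + c / 4 * c)"
    using aligned t by (intro mult_left_mono) auto
  moreover have "psi y - psi x = t * (- (G \<xi> \<bullet> G0)) + G \<xi> \<bullet> e"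
    using mv by (simp add: \<xi>_def e_def inner_add_right)
  ultimately have "psi y - psi x \<le> t * (- c\<^sup>2 + c / 4 * c) + 5 * c / 4 * (c / 4 * t)"
    by linarith
  also have "\<dots> < 0" using t c by (simp add: power2_eq_square field_simps)
  finally show ?thesis by simp
qed

lemma C2_boundary_interior_cone:
  fixes \<Omega> :: "'a::euclidean_space set"
  assumes \<Omega>: "open \<Omega>" and boundary: "C2_boundary \<Omega>" and z: "z \<in> closure \<Omega>"
  obtains \<nu> \<rho> where "0 < \<rho>" "interior_cone_at \<Omega> z \<nu> \<rho>"
proof (cases "z \<in> \<Omega>")
  case True
  then obtain \<rho> where "0 < \<rho>" "ball z \<rho> \<subseteq> \<Omega>" using \<Omega> open_contains_ball by blast
  then have "interior_cone_at \<Omega> z 0 \<rho>"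
    by (auto simp: interior_cone_at_def dist_commute)
  with \<open>0 < \<rho>\<close> show ?thesis by (rule that)
next
  case False
  then have "z \<in> frontier \<Omega>" using z \<Omega> by (simp add: frontier_def interior_open)
  then obtain r psi G H where r: "0 < r" and C2: "C2_with (ball z r) psi G H"
    and sublevel: "\<Omega> \<inter> ball z r = {x\<in>ball z r. psi x < 0}"
    and "\<forall>x\<in>frontier \<Omega> \<inter> ball z r. G x \<noteq> 0"
    using boundary unfolding C2_boundary_def by blast
  then have Gz: "G z \<noteq> 0" using \<open>z \<in> frontier \<Omega>\<close> by auto
  have dpsi: "\<And>x. x \<in> ball z r \<Longrightarrow> (psi has_derivative (\<lambda>h. G x \<bullet> h)) (at x)"
    and dG: "\<And>x. x \<in> ball z r \<Longrightarrow> (G has_derivative H x) (at x)"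
    using C2 unfolding C2_with_def by auto
  have "isCont G z" using dG[of z] r by (simp add: has_derivative_continuous)
  then obtain \<rho>1 where \<rho>1: "0 < \<rho>1" "\<And>y. dist y z < \<rho>1 \<Longrightarrow> dist (G y) (G z) < norm (G z) / 4"
    using Gz unfolding continuous_at_eps_delta by (meson zero_less_norm_iff divide_pos_pos zero_less_numeral)
  define \<rho> where "\<rho> = min (min \<rho>1 r) (norm (G z) / 4)"
  have \<rho>: "0 < \<rho>" using \<rho>1 r Gz by (simp add: \<rho>_def)
  have sub: "ball z \<rho> \<subseteq> ball z r" by (auto simp: \<rho>_def)
  have "interior_cone_at \<Omega> z (- G z) \<rho>"
    unfolding interior_cone_at_def
  proof (intro ballI allI impI)
    fix x y t
    assume x: "x \<in> closure \<Omega>" and "dist x z < \<rho>" "dist y z < \<rho>" and t: "0 < t"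
      and near: "norm (y - x - t *\<^sub>R (- G z)) \<le> \<rho> * t"
    then have xb: "x \<in> ball z \<rho>" and yb: "y \<in> ball z \<rho>" by (auto simp: dist_commute)
    have "continuous_on (ball z r) psi"
      using dpsi has_derivative_continuous by (blast intro: continuous_at_imp_continuous_on)
    then have "psi x \<le> 0" using closure_sublevel_nonpos sublevel x xb sub by blast
    moreover have "psi y < psi x"
    proof (rule gradient_descent_cone[OF convex_ball _ _ xb yb t Gz])
      show "\<And>x. x \<in> ball z \<rho> \<Longrightarrow> (psi has_derivative (\<lambda>h. G x \<bullet> h)) (at x)"
        using dpsi sub by blast
      show "norm (G \<xi> - G z) \<le> norm (G z) / 4" if "\<xi> \<in> ball z \<rho>" for \<xi>
        using \<rho>1(2)[of \<xi>] that by (simp add: \<rho>_def dist_norm norm_minus_commute)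
      have "\<rho> * t \<le> norm (G z) / 4 * t" using t by (intro mult_right_mono) (auto simp: \<rho>_def)
      then show "norm (y - x + t *\<^sub>R G z) \<le> norm (G z) / 4 * t"
        using near by simp
    qed
    ultimately have "y \<in> {x\<in>ball z r. psi x < 0}" using yb sub by auto
    then show "y \<in> \<Omega>" using sublevel by blast
  qed
  with \<rho> show ?thesis by (rule that)
qed

subsection \<open>Quadratic test functions\<close>

lemma visc_sub1_quadratic_max:
  fixes v :: "'a::euclidean_space \<Rightarrow> real"
  assumes sub: "visc_sub1 \<Omega> lam p g v" and y0: "y0 \<in> \<Omega>"
    and max: "\<And>y. y \<in> \<Omega> \<Longrightarrow> v y - k * (norm (y - a))\<^sup>2 \<le> v y0 - k * (norm (y0 - a))\<^sup>2"
  shows "lam * v y0 + norm ((2 * k) *\<^sub>R (y0 - a)) powr p \<le> g y0"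
proof -
  define \<phi> where "\<phi> = (\<lambda>y. k * (norm (y - a))\<^sup>2)"
  define D\<phi> where "D\<phi> = (\<lambda>y. (2 * k) *\<^sub>R (y - a))"
  have "C1_with UNIV \<phi> D\<phi>"
    unfolding C1_with_def
  proof (intro conjI ballI)
    show "continuous_on UNIV D\<phi>" unfolding D\<phi>_def by (intro continuous_intros)
    fix y :: 'a
    show "(\<phi> has_derivative (\<lambda>h. D\<phi> y \<bullet> h)) (at y)"
      unfolding \<phi>_def
      by (rule has_derivative_eq_rhs[OF has_derivative_mult_right[OF has_derivative_norm_diff_square]])
         (simp add: D\<phi>_def fun_eq_iff)
  qed simp
  moreover have "\<exists>r>0. \<forall>y\<in>ball y0 r \<inter> \<Omega>. v y - \<phi> y \<le> v y0 - \<phi> y0"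
    using max unfolding \<phi>_def by (intro exI[of _ 1]) auto
  ultimately have "lam * v y0 + norm (D\<phi> y0) powr p - g y0 \<le> 0"
    using sub y0 unfolding visc_sub1_def by blast
  then show ?thesis by (simp add: D\<phi>_def)
qed

lemma visc_super2_cl_quadratic_min:
  fixes u :: "'a::euclidean_space \<Rightarrow> real"
  assumes super: "visc_super2_cl \<Omega> lam p eps f u" and x0: "x0 \<in> closure \<Omega>" and r: "0 < r"
    and min: "\<And>x. x \<in> ball x0 r \<inter> closure \<Omega> \<Longrightarrow>
      u x0 - (- \<alpha> * (norm (x0 - z))\<^sup>2) \<le> u x - (q \<bullet> (x - x0) - \<beta> * (norm (x - x0))\<^sup>2 - \<alpha> * (norm (x - z))\<^sup>2)"
  shows "f x0 \<le> lam * u x0 + norm (q - (2 * \<alpha>) *\<^sub>R (x0 - z)) powr p + 2 * (\<alpha> + \<beta>) * eps * real DIM('a)"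
proof -
  define \<phi> where "\<phi> = (\<lambda>x. q \<bullet> (x - x0) - \<beta> * (norm (x - x0))\<^sup>2 - \<alpha> * (norm (x - z))\<^sup>2)"
  define D\<phi> where "D\<phi> = (\<lambda>x. q - (2 * \<beta>) *\<^sub>R (x - x0) - (2 * \<alpha>) *\<^sub>R (x - z))"
  define H\<phi> where "H\<phi> = (\<lambda>x::'a. \<lambda>h::'a. (- (2 * \<alpha> + 2 * \<beta>)) *\<^sub>R h)"
  have "C2_with UNIV \<phi> D\<phi> H\<phi>"
    unfolding C2_with_def
  proof (intro conjI ballI)
    fix x :: 'a
    have linear: "((\<lambda>x. q \<bullet> (x - x0)) has_derivative (\<lambda>h. q \<bullet> h)) (at x)"
      by (auto intro!: derivative_eq_intros)
    show "(\<phi> has_derivative (\<lambda>h. D\<phi> x \<bullet> h)) (at x)"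
      unfolding \<phi>_def
      by (rule has_derivative_eq_rhs[OF has_derivative_diff[OF has_derivative_diff[OF linear
            has_derivative_mult_right[OF has_derivative_norm_diff_square]]
            has_derivative_mult_right[OF has_derivative_norm_diff_square]]])
         (simp add: D\<phi>_def fun_eq_iff algebra_simps)
    show "(D\<phi> has_derivative H\<phi> x) (at x)"
      unfolding D\<phi>_def H\<phi>_def by (auto intro!: derivative_eq_intros simp: fun_eq_iff algebra_simps)
  qed (simp_all add: H\<phi>_def)
  moreover have "\<exists>r>0. \<forall>x\<in>ball x0 r \<inter> closure \<Omega>. u x - \<phi> x \<ge> u x0 - \<phi> x0"
    using min r unfolding \<phi>_def by auto
  ultimately have "lam * u x0 + norm (D\<phi> x0) powr p - eps * lap (H\<phi> x0) \<ge> f x0"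
    using super x0 unfolding visc_super2_cl_def by blast
  moreover have "lap (H\<phi> x0) = - (2 * \<alpha> + 2 * \<beta>) * real DIM('a)"
    unfolding H\<phi>_def by (rule lap_scaleR)
  ultimately show ?thesis by (simp add: D\<phi>_def algebra_simps)
qed

subsection \<open>Doubling of variables\<close>

lemma penalization_bounds:
  fixes k \<eta> \<delta> \<rho> L N E D r :: real
  assumes \<rho>: "0 < \<rho>" and \<delta>: "0 < \<delta>" and \<eta>: "0 < \<eta>" and L: "0 \<le> L" and N: "0 \<le> N"
    and k: "k = (L * (2 * N / \<rho> + 1) + 1) / (\<rho> * \<delta>)"
    and bound: "k * E\<^sup>2 + \<eta> * D\<^sup>2 \<le> L * (2 * \<delta> * N + E)"
    and small: "\<delta> * L * (2 * N + \<rho>) < \<eta> * r\<^sup>2"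
  shows "E \<le> \<rho> * \<delta>" and "D\<^sup>2 < r\<^sup>2"
proof -
  define C where "C = L * (2 * N / \<rho> + 1)"
  have k_scale: "k * (\<rho> * \<delta>) = C + 1" using \<rho> \<delta> by (simp add: k C_def)
  have "0 \<le> C" using L N \<rho> by (simp add: C_def)
  then have k_pos: "0 < k" using \<rho> \<delta> by (simp add: k C_def[symmetric])
  have "0 \<le> \<eta> * D\<^sup>2" "0 \<le> k * E\<^sup>2" using \<eta> k_pos by simp_all
  then have kE: "k * E\<^sup>2 \<le> L * (2 * \<delta> * N + E)" and \<eta>D: "\<eta> * D\<^sup>2 \<le> L * (2 * \<delta> * N + E)"
    using bound by linarith+
  show E_le: "E \<le> \<rho> * \<delta>"
  proof (rule ccontr)
    assume "\<not> E \<le> \<rho> * \<delta>"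
    then have E_gt: "\<rho> * \<delta> < E" by simp
    then have "\<delta> \<le> E / \<rho>" using \<rho> by (simp add: field_simps)
    then have "2 * \<delta> * N \<le> 2 * N * (E / \<rho>)"
      using mult_left_mono[of \<delta> "E / \<rho>" "2 * N"] N by (simp add: ac_simps)
    then have "L * (2 * \<delta> * N + E) \<le> L * (2 * N * (E / \<rho>) + E)"
      using L by (intro mult_left_mono) auto
    also have "\<dots> = C * E" by (simp add: C_def algebra_simps)
    finally have "(k * E) * E \<le> C * E" using kE by (simp add: power2_eq_square)
    moreover have "0 < E" using E_gt mult_pos_pos[OF \<rho> \<delta>] by linarith
    ultimately have "k * E \<le> C" by simp
    moreover have "k * (\<rho> * \<delta>) < k * E" using E_gt k_pos by simp
    ultimately show False using k_scale by linarith
  qed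
  note \<eta>D
  also have "L * (2 * \<delta> * N + E) \<le> L * (2 * \<delta> * N + \<rho> * \<delta>)" using E_le L by (intro mult_left_mono) auto
  also have "\<dots> = \<delta> * L * (2 * N + \<rho>)" by (simp add: algebra_simps)
  also have "\<dots> < \<eta> * r\<^sup>2" by (rule small)
  finally show "D\<^sup>2 < r\<^sup>2" using \<eta> by simp
qed

lemma eventually_at_right_0_mult_less:
  fixes b c :: real
  assumes "0 < b"
  shows "\<forall>\<^sub>F x in at_right 0. x * c < b"
proof -
  have "((\<lambda>x. x * c) \<longlongrightarrow> 0 * c) (at_right 0)"
    by (intro tendsto_mult tendsto_ident_at tendsto_const)
  then show ?thesis using assms by (simp add: order_tendstoD(2))
qed

text \<open>Only the supersolution property of u enters, so the estimate holds for every continuous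
  supersolution, not only for the maximal solution of the state-constraint problem.\<close>

locale semiconvex_comparison =
  fixes \<Omega> :: "'a::euclidean_space set" and lam p eps K Lf Lv :: real and f g u v :: "'a \<Rightarrow> real"
  assumes open_domain: "open \<Omega>" and bounded_domain: "bounded \<Omega>" and nonempty_domain: "\<Omega> \<noteq> {}"
    and boundary_C2: "C2_boundary \<Omega>"
    and p_ge_1: "1 \<le> p" and lam_pos: "0 < lam"
    and f_lipschitz: "Lf-lipschitz_on (closure \<Omega>) f"
    and u_continuous: "continuous_on (closure \<Omega>) u" and u_super: "visc_super2_cl \<Omega> lam p eps f u"
    and g_continuous: "continuous_on (closure \<Omega>) g"
    and v_lipschitz: "Lv-lipschitz_on (closure \<Omega>) v" and v_sub: "visc_sub1 \<Omega> lam p g v"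
    and v_semiconvex: "semiconvex_on \<Omega> K v"
begin

lemma Lv_nonneg: "0 \<le> Lv" and Lf_nonneg: "0 \<le> Lf"
  using lipschitz_on_nonneg v_lipschitz f_lipschitz by blast+

lemma v_lipschitz_bound: "x \<in> closure \<Omega> \<Longrightarrow> y \<in> closure \<Omega> \<Longrightarrow> v x - v y \<le> Lv * norm (x - y)"
  using lipschitz_onD[OF v_lipschitz] by (fastforce simp: dist_real_def dist_norm)

lemma f_lipschitz_bound: "x \<in> closure \<Omega> \<Longrightarrow> y \<in> closure \<Omega> \<Longrightarrow> f x - f y \<le> Lf * norm (x - y)"
  using lipschitz_onD[OF f_lipschitz] by (fastforce simp: dist_real_def dist_norm)

lemma doubling_minimizer:
  fixes z \<nu> :: 'a and \<rho> \<eta> \<delta> :: real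
  assumes z: "z \<in> closure \<Omega>" and z_min: "\<And>x. x \<in> closure \<Omega> \<Longrightarrow> u z - v z \<le> u x - v x"
    and cone: "interior_cone_at \<Omega> z \<nu> \<rho>" and \<rho>: "0 < \<rho>" and \<eta>: "0 < \<eta>" and \<delta>: "0 < \<delta>"
    and small_penalty: "\<delta> * Lv * (2 * norm \<nu> + \<rho>) < \<eta> * (\<rho> / 2)\<^sup>2"
    and small_shift: "\<delta> * (norm \<nu> + \<rho>) < \<rho> / 2"
  obtains xd yd k where "xd \<in> closure \<Omega>" "dist xd z < \<rho> / 2" "yd \<in> \<Omega>"
    "norm (yd - xd - \<delta> *\<^sub>R \<nu>) \<le> \<rho> * \<delta>" "u xd - v yd \<le> u z - v z + Lv * \<delta> * norm \<nu>"
    "\<And>x y. x \<in> closure \<Omega> \<Longrightarrow> dist x z \<le> \<rho> / 2 \<Longrightarrow> y \<in> closure \<Omega> \<Longrightarrow>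
      u xd - v yd + k * (norm (yd - xd - \<delta> *\<^sub>R \<nu>))\<^sup>2 + \<eta> * (norm (xd - z))\<^sup>2
      \<le> u x - v y + k * (norm (y - x - \<delta> *\<^sub>R \<nu>))\<^sup>2 + \<eta> * (norm (x - z))\<^sup>2"
proof -
  define N where "N = norm \<nu>"
  define k where "k = (Lv * (2 * N / \<rho> + 1) + 1) / (\<rho> * \<delta>)"
  define \<Phi> where "\<Phi> = (\<lambda>w. u (fst w) - v (snd w) + k * (norm (snd w - fst w - \<delta> *\<^sub>R \<nu>))\<^sup>2
    + \<eta> * (norm (fst w - z))\<^sup>2)"
  define S where "S = (closure \<Omega> \<inter> cball z (\<rho> / 2)) \<times> closure \<Omega>"
  have "compact S"
    unfolding S_def using bounded_domain
    by (intro compact_Times compact_Int_closed) (auto simp: compact_closure)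
  moreover have "S \<noteq> {}" using z \<rho> by (auto simp: S_def)
  moreover have "continuous_on S \<Phi>"
    unfolding \<Phi>_def S_def
    by (intro continuous_intros continuous_on_compose2[OF u_continuous]
        continuous_on_compose2[OF v_lipschitz[THEN lipschitz_on_continuous_on]]) auto
  ultimately obtain w where "w \<in> S" and w_min: "\<And>w'. w' \<in> S \<Longrightarrow> \<Phi> w \<le> \<Phi> w'"
    using continuous_attains_inf by metis
  obtain xd yd where w: "w = (xd, yd)" by (cases w)
  have xd: "xd \<in> closure \<Omega>" "dist xd z \<le> \<rho> / 2" and yd: "yd \<in> closure \<Omega>"
    using \<open>w \<in> S\<close> by (auto simp: S_def w dist_commute)
  have min: "\<Phi> (xd, yd) \<le> \<Phi> (x, y)" if "x \<in> closure \<Omega>" "dist x z \<le> \<rho> / 2" "y \<in> closure \<Omega>" for x y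
    using w_min[of "(x, y)"] that by (auto simp: S_def w dist_commute)
  define E where "E = norm (yd - xd - \<delta> *\<^sub>R \<nu>)"
  define D where "D = norm (xd - z)"
  have \<Phi>_xy: "\<Phi> (xd, yd) = u xd - v yd + k * E\<^sup>2 + \<eta> * D\<^sup>2"
    by (simp add: \<Phi>_def E_def D_def)
  have "\<delta> * norm \<nu> \<le> \<delta> * (norm \<nu> + \<rho>)" using \<delta> \<rho> by (intro mult_left_mono) auto
  then have "\<delta> * norm \<nu> < \<rho>" using small_shift \<rho> by linarith
  then have shifted: "z + \<delta> *\<^sub>R \<nu> \<in> \<Omega>"
    using \<delta> \<rho> by (intro interior_cone_atD[OF cone z]) (auto simp: dist_norm)
  have "\<Phi> (xd, yd) \<le> u z - v z + (v z - v (z + \<delta> *\<^sub>R \<nu>))"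
    using min[OF z _ closure_subset[THEN subsetD, OF shifted]] \<rho> by (simp add: \<Phi>_def)
  also have "v z - v (z + \<delta> *\<^sub>R \<nu>) \<le> Lv * \<delta> * N"
    using v_lipschitz_bound[OF z closure_subset[THEN subsetD, OF shifted]] \<delta>
    by (simp add: N_def)
  finally have upper: "\<Phi> (xd, yd) \<le> u z - v z + Lv * \<delta> * N" by simp
  have "norm (xd - yd) \<le> \<delta> * N + E"
    using norm_triangle_ineq[of "\<delta> *\<^sub>R \<nu>" "yd - xd - \<delta> *\<^sub>R \<nu>"] \<delta>
    by (simp add: E_def N_def norm_minus_commute)
  then have "v yd - v xd \<le> Lv * (\<delta> * N + E)"
    using v_lipschitz_bound[OF yd xd(1)] Lv_nonneg mult_left_mono
    by (fastforce simp: norm_minus_commute)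
  then have penalty: "k * E\<^sup>2 + \<eta> * D\<^sup>2 \<le> Lv * (2 * \<delta> * N + E)"
    using upper z_min[OF xd(1)] \<Phi>_xy by (simp add: algebra_simps)
  have "0 \<le> N" by (simp add: N_def)
  note bounds = penalization_bounds[OF \<rho> \<delta> \<eta> Lv_nonneg this k_def penalty small_penalty[folded N_def]]
  have E_le: "E \<le> \<rho> * \<delta>" by (fact bounds(1))
  have D_lt: "D < \<rho> / 2" using power2_less_imp_less[OF bounds(2)] \<rho> by simp
  have "norm (yd - z) \<le> norm (xd - z) + (norm (\<delta> *\<^sub>R \<nu>) + norm (yd - xd - \<delta> *\<^sub>R \<nu>))"
    using norm_triangle_ineq[of "xd - z" "\<delta> *\<^sub>R \<nu> + (yd - xd - \<delta> *\<^sub>R \<nu>)"]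
      norm_triangle_ineq[of "\<delta> *\<^sub>R \<nu>" "yd - xd - \<delta> *\<^sub>R \<nu>"] by simp
  also have "\<dots> = D + (\<delta> * N + E)" using \<delta> by (simp add: D_def E_def N_def)
  also have "\<dots> < \<rho>" using D_lt E_le small_shift by (simp add: N_def algebra_simps)
  finally have "dist yd z < \<rho>" by (simp add: dist_norm)
  moreover have "dist xd z < \<rho>" using D_lt \<rho> by (simp add: D_def dist_norm)
  ultimately have yd_in: "yd \<in> \<Omega>"
    using E_le by (intro interior_cone_atD[OF cone xd(1) _ _ \<delta>]) (auto simp: E_def mult.commute)
  have "0 \<le> k * E\<^sup>2" "0 \<le> \<eta> * D\<^sup>2"
    using \<rho> \<delta> \<eta> Lv_nonneg \<open>0 \<le> N\<close> by (simp_all add: k_def)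
  then have gap: "u xd - v yd \<le> u z - v z + Lv * \<delta> * norm \<nu>"
    using upper \<Phi>_xy by (simp add: N_def)
  have xd_near: "dist xd z < \<rho> / 2" using D_lt by (simp add: D_def dist_norm)
  show ?thesis
    by (rule that[OF xd(1) xd_near yd_in E_le[unfolded E_def] gap, of k]) (use min in \<open>simp add: \<Phi>_def\<close>)
qed

lemma doubling_estimate:
  fixes z \<nu> :: 'a and \<rho> \<eta> \<delta> mf M :: real
  assumes z: "z \<in> closure \<Omega>" and z_min: "\<And>x. x \<in> closure \<Omega> \<Longrightarrow> u z - v z \<le> u x - v x"
    and cone: "interior_cone_at \<Omega> z \<nu> \<rho>" and \<rho>: "0 < \<rho>" and \<eta>: "0 < \<eta>" and \<delta>: "0 < \<delta>"
    and small_penalty: "\<delta> * Lv * (2 * norm \<nu> + \<rho>) < \<eta> * (\<rho> / 2)\<^sup>2"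
    and small_shift: "\<delta> * (norm \<nu> + \<rho>) < \<rho> / 2" and small_localization: "\<eta> * \<rho> \<le> 1"
    and mf: "\<And>x. x \<in> closure \<Omega> \<Longrightarrow> mf \<le> f x - g x"
    and M: "\<And>y. y \<in> closure \<Omega> \<Longrightarrow> g y - lam * v y \<le> M"
  shows "mf - K * real DIM('a) * eps \<le> lam * (u z - v z)
    + \<eta> * (2 * eps * real DIM('a) + p * (max 1 M + 1) powr (p - 1) * \<rho>)
    + \<delta> * (Lf * (norm \<nu> + \<rho>) + lam * Lv * norm \<nu>)"
proof -
  obtain xd yd k where xd: "xd \<in> closure \<Omega>" "dist xd z < \<rho> / 2" and yd: "yd \<in> \<Omega>"
    and close: "norm (yd - xd - \<delta> *\<^sub>R \<nu>) \<le> \<rho> * \<delta>"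
    and gap: "u xd - v yd \<le> u z - v z + Lv * \<delta> * norm \<nu>"
    and min: "\<And>x y. x \<in> closure \<Omega> \<Longrightarrow> dist x z \<le> \<rho> / 2 \<Longrightarrow> y \<in> closure \<Omega> \<Longrightarrow>
      u xd - v yd + k * (norm (yd - xd - \<delta> *\<^sub>R \<nu>))\<^sup>2 + \<eta> * (norm (xd - z))\<^sup>2
      \<le> u x - v y + k * (norm (y - x - \<delta> *\<^sub>R \<nu>))\<^sup>2 + \<eta> * (norm (x - z))\<^sup>2"
    using doubling_minimizer[OF z z_min cone \<rho> \<eta> \<delta> small_penalty small_shift] by blast
  have yd_cl: "yd \<in> closure \<Omega>" using yd closure_subset by blast
  define a where "a = xd + \<delta> *\<^sub>R \<nu>"
  define q where "q = (2 * k) *\<^sub>R (yd - a)"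
  have v_max: "v y - k * (norm (y - a))\<^sup>2 \<le> v yd - k * (norm (yd - a))\<^sup>2" if "y \<in> closure \<Omega>" for y
    using min[OF xd(1) _ that] xd(2) by (simp add: a_def diff_diff_eq)
  have sub: "lam * v yd + norm q powr p \<le> g yd"
    unfolding q_def by (rule visc_sub1_quadratic_max[OF v_sub yd]) (use v_max closure_subset in blast)
  obtain R where R: "0 < R" "ball yd R \<subseteq> \<Omega>" using open_domain yd open_contains_ball by blast
  have super: "f xd \<le> lam * u xd + norm (q - (2 * \<eta>) *\<^sub>R (xd - z)) powr p
      + 2 * (\<eta> + K / 2) * eps * real DIM('a)"
  proof (rule visc_super2_cl_quadratic_min[OF u_super xd(1)])
    show "0 < min R (\<rho> / 2 - dist xd z)" using R xd(2) by simp
    fix x assume x: "x \<in> ball xd (min R (\<rho> / 2 - dist xd z)) \<inter> closure \<Omega>"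
    define y where "y = x + (yd - xd)"
    have "dist x z \<le> \<rho> / 2" using x dist_triangle[of x z xd] by (auto simp: dist_commute)
    moreover have y_ball: "y \<in> ball yd R" using x by (simp add: y_def dist_norm algebra_simps)
    then have "y \<in> closure \<Omega>" using R(2) closure_subset by blast
    moreover have "y - x - \<delta> *\<^sub>R \<nu> = yd - xd - \<delta> *\<^sub>R \<nu>" by (simp add: y_def)
    ultimately have "u xd - v yd + \<eta> * (norm (xd - z))\<^sup>2 \<le> u x - v y + \<eta> * (norm (x - z))\<^sup>2"
      using min[of x y] x by simp
    moreover have "v yd + q \<bullet> (y - yd) - K / 2 * (norm (y - yd))\<^sup>2 \<le> v y"
      unfolding q_def by (rule semiconvex_quadratic_max_support[OF v_semiconvex R(2) _ y_ball])
        (use v_max R(2) closure_subset in blast)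
    moreover have "y - yd = x - xd" by (simp add: y_def)
    ultimately show "u xd - (- \<eta> * (norm (xd - z))\<^sup>2)
        \<le> u x - (q \<bullet> (x - xd) - K / 2 * (norm (x - xd))\<^sup>2 - \<eta> * (norm (x - z))\<^sup>2)"
      by simp
  qed
  have "norm q powr p \<le> M" using sub M[OF yd_cl] by linarith
  then have "norm q \<le> max 1 M"
    using powr_mono[of 1 p "norm q"] p_ge_1 by (cases "norm q \<le> 1") auto
  moreover have "norm ((2 * \<eta>) *\<^sub>R (xd - z)) \<le> \<eta> * \<rho>"
    using xd(2) \<eta> by (simp add: dist_norm)
  ultimately have hamiltonian: "norm (q - (2 * \<eta>) *\<^sub>R (xd - z)) powr p
      \<le> norm q powr p + p * (max 1 M + 1) powr (p - 1) * (\<eta> * \<rho>)"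
    using norm_diff_powr_le[OF p_ge_1] small_localization by blast
  have "norm (xd - yd) \<le> \<delta> * (norm \<nu> + \<rho>)"
    using norm_triangle_ineq[of "\<delta> *\<^sub>R \<nu>" "yd - xd - \<delta> *\<^sub>R \<nu>"] close \<delta>
    by (simp add: norm_minus_commute algebra_simps)
  then have "f yd - f xd \<le> Lf * (\<delta> * (norm \<nu> + \<rho>))"
    using f_lipschitz_bound[OF yd_cl xd(1)] Lf_nonneg mult_left_mono
    by (fastforce simp: norm_minus_commute)
  moreover have "lam * (u xd - v yd) \<le> lam * (u z - v z) + lam * (Lv * \<delta> * norm \<nu>)"
    using mult_left_mono[OF gap, of lam] lam_pos by (simp add: distrib_left)
  ultimately show ?thesis
    using super sub hamiltonian mf[OF yd_cl] by (simp add: algebra_simps)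
qed

lemma min_diff_lower_bound:
  fixes z :: 'a and mf M :: real
  assumes z: "z \<in> closure \<Omega>" and z_min: "\<And>x. x \<in> closure \<Omega> \<Longrightarrow> u z - v z \<le> u x - v x"
    and mf: "\<And>x. x \<in> closure \<Omega> \<Longrightarrow> mf \<le> f x - g x"
    and M: "\<And>y. y \<in> closure \<Omega> \<Longrightarrow> g y - lam * v y \<le> M"
  shows "mf - K * real DIM('a) * eps \<le> lam * (u z - v z)"
proof (rule field_le_epsilon)
  obtain \<nu> \<rho> where \<rho>: "0 < \<rho>" and cone: "interior_cone_at \<Omega> z \<nu> \<rho>"
    using C2_boundary_interior_cone[OF open_domain boundary_C2 z] by blast
  define c1 where "c1 = 2 * eps * real DIM('a) + p * (max 1 M + 1) powr (p - 1) * \<rho>"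
  define c2 where "c2 = Lf * (norm \<nu> + \<rho>) + lam * Lv * norm \<nu>"
  fix \<gamma> :: real assume \<gamma>: "0 < \<gamma>"
  have "\<forall>\<^sub>F \<eta> in at_right 0. 0 < \<eta> \<and> \<eta> * \<rho> < 1 \<and> \<eta> * c1 < \<gamma> / 2"
    using \<gamma> by (intro eventually_conj eventually_at_right_less eventually_at_right_0_mult_less) auto
  then obtain \<eta> where \<eta>: "0 < \<eta>" "\<eta> * \<rho> < 1" "\<eta> * c1 < \<gamma> / 2"
    using eventually_happens'[OF trivial_limit_at_right_real] by blast
  have "\<forall>\<^sub>F \<delta> in at_right 0. 0 < \<delta> \<and> \<delta> * (Lv * (2 * norm \<nu> + \<rho>)) < \<eta> * (\<rho> / 2)\<^sup>2
      \<and> \<delta> * (norm \<nu> + \<rho>) < \<rho> / 2 \<and> \<delta> * c2 < \<gamma> / 2"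
    using \<gamma> \<eta> \<rho> by (intro eventually_conj eventually_at_right_less eventually_at_right_0_mult_less) auto
  then obtain \<delta> where \<delta>: "0 < \<delta>" "\<delta> * (Lv * (2 * norm \<nu> + \<rho>)) < \<eta> * (\<rho> / 2)\<^sup>2"
      "\<delta> * (norm \<nu> + \<rho>) < \<rho> / 2" "\<delta> * c2 < \<gamma> / 2"
    using eventually_happens'[OF trivial_limit_at_right_real] by blast
  have "mf - K * real DIM('a) * eps \<le> lam * (u z - v z) + \<eta> * c1 + \<delta> * c2"
    unfolding c1_def c2_def
    using \<delta>(2) \<eta>(2) by (intro doubling_estimate[OF z z_min cone \<rho> \<eta>(1) \<delta>(1) _ \<delta>(3) _ mf M])
      (auto simp: mult.assoc)
  with \<eta>(3) \<delta>(4) show "mf - K * real DIM('a) * eps \<le> lam * (u z - v z) + \<gamma>" by linarith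
qed

lemma Inf_diff_lower_bound:
  "Inf ((\<lambda>x. u x - v x) ` closure \<Omega>)
    \<ge> (1 / lam) * (- K * real DIM('a) * eps + Inf ((\<lambda>x. f x - g x) ` closure \<Omega>))"
proof -
  have cpt: "compact (closure \<Omega>)" using bounded_domain by (simp add: compact_closure)
  have ne: "closure \<Omega> \<noteq> {}" using nonempty_domain by simp
  have v_cont: "continuous_on (closure \<Omega>) v" and f_cont: "continuous_on (closure \<Omega>) f"
    using v_lipschitz f_lipschitz by (auto intro: lipschitz_on_continuous_on)
  obtain z where z: "z \<in> closure \<Omega>" and z_min: "\<And>x. x \<in> closure \<Omega> \<Longrightarrow> u z - v z \<le> u x - v x"
    using continuous_attains_inf[OF cpt ne, of "\<lambda>x. u x - v x"] u_continuous v_cont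
    by (auto intro: continuous_on_diff)
  obtain x1 where x1: "x1 \<in> closure \<Omega>" and x1_min: "\<And>x. x \<in> closure \<Omega> \<Longrightarrow> f x1 - g x1 \<le> f x - g x"
    using continuous_attains_inf[OF cpt ne, of "\<lambda>x. f x - g x"] f_cont g_continuous
    by (auto intro: continuous_on_diff)
  have "continuous_on (closure \<Omega>) (\<lambda>y. g y - lam * v y)"
    by (intro continuous_intros g_continuous v_cont)
  then obtain y1 where "\<And>y. y \<in> closure \<Omega> \<Longrightarrow> g y - lam * v y \<le> g y1 - lam * v y1"
    using continuous_attains_sup[OF cpt ne] by blast
  then have "f x1 - g x1 - K * real DIM('a) * eps \<le> lam * (u z - v z)"
    by (intro min_diff_lower_bound[OF z z_min x1_min])
  moreover have "Inf ((\<lambda>x. u x - v x) ` closure \<Omega>) = u z - v z"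
    by (rule cInf_eq_minimum) (use z z_min in auto)
  moreover have "Inf ((\<lambda>x. f x - g x) ` closure \<Omega>) = f x1 - g x1"
    by (rule cInf_eq_minimum) (use x1 x1_min in auto)
  ultimately show ?thesis using lam_pos by (simp only:) (simp add: field_simps)
qed

end

theorem mainTheorem8:
  fixes \<Omega> :: "'a::euclidean_space set"
    and p lam eps K :: real
    and f g u v :: "'a \<Rightarrow> real"
  assumes "open \<Omega>" "bounded \<Omega>" "\<Omega> \<noteq> {}" "C2_boundary \<Omega>"
    and "p > 2" "lam > 0" "eps > 0"
    and "\<exists>L. L-lipschitz_on (closure \<Omega>) f"
    and "SC_maximal_solution \<Omega> lam p eps f u"
    and "continuous_on (closure \<Omega>) g"
    and "\<exists>L. L-lipschitz_on (closure \<Omega>) v"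
    and "visc_sub1 \<Omega> lam p g v"
    and "semiconvex_on \<Omega> K v"
  shows "Inf ((\<lambda>x. u x - v x) ` closure \<Omega>)
           \<ge> (1 / lam) * (- K * real DIM('a) * eps + Inf ((\<lambda>x. f x - g x) ` closure \<Omega>))"
proof -
  obtain Lf Lv where "Lf-lipschitz_on (closure \<Omega>) f" "Lv-lipschitz_on (closure \<Omega>) v"
    using assms(8,11) by blast
  moreover have "continuous_on (closure \<Omega>) u" "visc_super2_cl \<Omega> lam p eps f u"
    using assms(9) unfolding SC_maximal_solution_def SC_solution_def by auto
  ultimately interpret semiconvex_comparison \<Omega> lam p eps K Lf Lv f g u v
    using assms by unfold_locales auto
  show ?thesis by (rule Inf_diff_lower_bound)
qed

end
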